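(* Let $\Sigma\in\mathsf{c}\text{-}\mathsf{Fan}^{+-}_{\rm sc}(2)$ have $n$ two-dimensional cones and quiddity sequence $\mathrm{s}(\Sigma)=(a_1,\dots,a_{n-2};0,0)$. If $n\ge5$, then there exists $2\le i\le n-3$ with $a_i=1$.
   Context: $\mathsf{c}\text{-}\mathsf{Fan}^{+-}_{\rm sc}(2)$: complete nonsingular fans in $\mathbb{R}^2$ (each 2-dimensional cone generated by a $\mathbb{Z}$-basis) containing $\operatorname{cone}\{(1,0),(0,1)\}$, $\operatorname{cone}\{(-1,0),(0,-1)\}$ and $\operatorname{cone}\{(-1,0),(0,1)\}$, with every cone in a closed coordinate quadrant and every ray in exactly two 2-dimensional cones. Its primitive ray generators in clockwise order are $v_1=(1,0),v_2,\dots,v_{n-2}=(0,-1),v_{n-1}=(-1,0),v_n=(0,1)$, and the integers $a_j$ are defined by $a_jv_j=v_{j-1}+v_{j+1}$ (indices mod $n$). *)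

theory Defs
  imports Main
begin

definition det2 :: "int \<times> int \<Rightarrow> int \<times> int \<Rightarrow> int" where
  "det2 u w = fst u * snd w - snd u * fst w"

definition cyc_prev :: "nat \<Rightarrow> nat \<Rightarrow> nat" where
  "cyc_prev n j = (if j = 1 then n else j - 1)"
definition cyc_next :: "nat \<Rightarrow> nat \<Rightarrow> nat" where
  "cyc_next n j = (if j = n then 1 else j + 1)"

text \<open>The primitive ray generators v 1, ..., v n (listed clockwise) of a fan in
  c-Fan^{+-}_sc(2) with n two-dimensional cones: the 2-cones are cone(v j, v (j+1))
  (indices mod n), each generated by a Z-basis oriented clockwise (det = -1);
  v 1 = (1,0), v (n-2) = (0,-1), v (n-1) = (-1,0), v n = (0,1); every cone lies in a
  closed coordinate quadrant, so v 2, ..., v (n-3) lie in the closed fourth quadrant.\<close>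
definition cfan_sc_rays :: "nat \<Rightarrow> (nat \<Rightarrow> int \<times> int) \<Rightarrow> bool" where
  "cfan_sc_rays n v \<longleftrightarrow>
     4 \<le> n \<and>
     v 1 = (1, 0) \<and> v (n - 2) = (0, -1) \<and> v (n - 1) = (-1, 0) \<and> v n = (0, 1) \<and>
     (\<forall>j \<in> {1..n}. det2 (v j) (v (cyc_next n j)) = -1) \<and>
     (\<forall>j \<in> {1..n-2}. 0 \<le> fst (v j) \<and> snd (v j) \<le> 0)"

definition is_quiddity :: "nat \<Rightarrow> (nat \<Rightarrow> int \<times> int) \<Rightarrow> (nat \<Rightarrow> int) \<Rightarrow> bool" where
  "is_quiddity n v a \<longleftrightarrow>
     (\<forall>j \<in> {1..n}.
        a j * fst (v j) = fst (v (cyc_prev n j)) + fst (v (cyc_next n j)) \<and>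
        a j * snd (v j) = snd (v (cyc_prev n j)) + snd (v (cyc_next n j)))"

end

theory Submission
  imports Defs
begin

text \<open>The linear form h u = fst u - snd u is the l1-norm on the closed fourth quadrant,
  where the rays v 1, ..., v (n-2) live. It is 1 at both ends v 1 = (1,0) and v (n-2) = (0,-1)
  and at least 2 at v 2, so it has a peak h (v (i-1)) < h (v i) \<ge> h (v (i+1)) with
  1 < i < n-2. Applying h to the quiddity relation a i v i = v (i-1) + v (i+1) gives
  0 < a i * h (v i) < 2 * h (v i), hence a i = 1.\<close>

definition height :: "int \<times> int \<Rightarrow> int" where
  "height u = fst u - snd u"

lemma ex_peak_between:
  fixes f :: "nat \<Rightarrow> 'a::linorder"
  assumes "l + 2 \<le> r" and "f l < f (l + 1)" and "f r \<le> f (r - 1)"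
  shows "\<exists>i. l < i \<and> i < r \<and> f (i - 1) < f i \<and> f (i + 1) \<le> f i"
  using assms
proof (induction r rule: nat_induct_at_least)
  case base
  then show ?case by (intro exI[of _ "l + 1"]) simp
next
  case (Suc r)
  show ?case
  proof (cases "f r \<le> f (r - 1)")
    case True
    with Suc.IH[OF Suc.prems(1)] show ?thesis by (auto intro: less_SucI)
  next
    case False
    with Suc.prems(2) Suc.hyps show ?thesis by (intro exI[of _ r]) auto
  qed
qed

lemma int_eq_1_if_mult_eq_peak_sum:
  fixes c m p q :: int
  assumes "c * m = p + q" and "0 < p" and "p < m" and "0 < q" and "q \<le> m"
  shows "c = 1"
proof -
  have "0 < c * m" and "c * m < 2 * m" using assms by linarith+
  then have "0 < c" and "c < 2" using assms(2,3)
    by (simp_all add: zero_less_mult_iff mult_less_cancel_right)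
  then show ?thesis by simp
qed

lemma height_pos_if_det2:
  assumes "0 \<le> fst u" and "snd u \<le> 0" and "det2 u w = -1"
  shows "0 < height u"
proof -
  have "u \<noteq> (0, 0)" using assms(3) by (auto simp: det2_def)
  with assms(1,2) show ?thesis by (cases u) (auto simp: height_def)
qed

lemma height_ge_2_after_x_axis:
  assumes "det2 (1, 0) w = -1" and "det2 w z = -1"
    and "0 \<le> fst w" and "0 \<le> fst z" and "snd z \<le> 0"
  shows "2 \<le> height w"
proof -
  obtain x where w: "w = (x, -1)" using assms(1) by (cases w) (simp add: det2_def)
  have "x \<noteq> 0" using assms(2,4) by (cases z) (auto simp: w det2_def)
  then show ?thesis using assms(3) by (simp add: w height_def)
qed

lemma cfan_sc_rays_det2_Suc:
  assumes "cfan_sc_rays n v" and "1 \<le> j" and "j < n"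
  shows "det2 (v j) (v (Suc j)) = -1"
proof -
  have "det2 (v j) (v (cyc_next n j)) = -1" using assms by (auto simp: cfan_sc_rays_def)
  with assms(3) show ?thesis by (simp add: cyc_next_def)
qed

lemma cfan_sc_rays_fourth_quadrant:
  assumes "cfan_sc_rays n v" and "1 \<le> j" and "j \<le> n - 2"
  shows "0 \<le> fst (v j)" and "snd (v j) \<le> 0"
  using assms by (auto simp: cfan_sc_rays_def)

lemma cfan_sc_rays_height_pos:
  assumes "cfan_sc_rays n v" and "1 \<le> j" and "j \<le> n - 2"
  shows "0 < height (v j)"
  using assms cfan_sc_rays_det2_Suc[of n v j] cfan_sc_rays_fourth_quadrant[of n v j]
  by (intro height_pos_if_det2[where w = "v (Suc j)"]) auto

lemma cfan_sc_rays_height_2: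
  assumes "cfan_sc_rays n v" and "5 \<le> n"
  shows "2 \<le> height (v 2)"
proof -
  have "v 1 = (1, 0)" using assms(1) by (simp add: cfan_sc_rays_def)
  moreover have "det2 (v 1) (v 2) = -1" and "det2 (v 2) (v 3) = -1"
    using cfan_sc_rays_det2_Suc[OF assms(1), of 1] cfan_sc_rays_det2_Suc[OF assms(1), of 2]
      assms(2) by (simp_all add: numeral_eq_Suc)
  ultimately show ?thesis
    using cfan_sc_rays_fourth_quadrant[OF assms(1)] assms(2)
    by (intro height_ge_2_after_x_axis[where z = "v 3"]) auto
qed

lemma is_quiddity_height:
  assumes "is_quiddity n v a" and "1 < j" and "j < n"
  shows "a j * height (v j) = height (v (j - 1)) + height (v (j + 1))"
proof -
  have "a j * fst (v j) = fst (v (j - 1)) + fst (v (j + 1))"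
    and "a j * snd (v j) = snd (v (j - 1)) + snd (v (j + 1))"
    using assms by (auto simp: is_quiddity_def cyc_prev_def cyc_next_def)
  then show ?thesis by (simp add: height_def right_diff_distrib)
qed

theorem lemma2p11:
  fixes n :: nat and v :: "nat \<Rightarrow> int \<times> int" and a :: "nat \<Rightarrow> int"
  assumes "cfan_sc_rays n v"
    and "is_quiddity n v a"
    and "5 \<le> n"
  shows "\<exists>i. 2 \<le> i \<and> i \<le> n - 3 \<and> a i = 1"
proof -
  let ?h = "\<lambda>j. height (v j)"
  have pos: "0 < ?h j" if "1 \<le> j" "j \<le> n - 2" for j
    using cfan_sc_rays_height_pos[OF assms(1) that] .
  have ends: "v 1 = (1, 0)" "v (n - 2) = (0, -1)"
    using assms(1) by (auto simp: cfan_sc_rays_def)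
  have rise: "?h 1 < ?h (1 + 1)"
    using cfan_sc_rays_height_2[OF assms(1,3)] ends(1) by (simp add: height_def numeral_2_eq_2)
  have "0 < ?h (n - 2 - 1)" using assms(3) by (intro pos) auto
  then have fall: "?h (n - 2) \<le> ?h (n - 2 - 1)" using ends(2) by (simp add: height_def)
  have "1 + 2 \<le> n - 2" using assms(3) by simp
  from ex_peak_between[OF this rise fall] obtain i
    where i: "1 < i" "i < n - 2" "?h (i - 1) < ?h i" "?h (i + 1) \<le> ?h i"
    by blast
  have "a i = 1"
    using is_quiddity_height[OF assms(2), of i] pos[of "i - 1"] pos[of "i + 1"] i
    by (intro int_eq_1_if_mult_eq_peak_sum[of "a i" "?h i"]) auto
  then show ?thesis using i by (intro exI[of _ i]) auto
qed

end
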